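(* In the setting below, there exists a unique $\tilde D\in\mathcal D_n^+$ satisfying $$\tilde D=\frac{\Lambda^{\bar C}(u^\tau(\tilde D))}{I_n+u^\tau(\tilde D)\Lambda^{\bar C}(u^\tau(\tilde D))}.$$
   Context: $\mathcal D_n^+$: $n\times n$ diagonal matrices with positive diagonal entries; operations on diagonal matrices are entrywise. $\gamma>0$ fixed. $u:(0,\infty)\to(0,\infty)$ is bounded by $u^\infty$, with $t\mapsto tu(t)$ non-decreasing and $t\mapsto u(t)/t$ non-increasing. Data: $x_i=\sqrt{\tau_i}z_i+m$ with $z_1,\ldots,z_n\in\mathbb R^p$ independent random vectors with $C_i=\mathbb E[z_iz_i^T]$ and $\inf_i\frac1n\operatorname{tr}C_i>0$, $\tau_i>0$ deterministic, $m\in\mathbb R^p$ deterministic. Let $\underline\tau=\mathrm{diag}(\max(\tau_i,1))$, $\bar\tau=\mathrm{diag}(\min(\tau_i,1))$, $\bar z_i=x_i/\sqrt{\underline\tau_i}$, $\bar C_i=\mathbb E[\bar z_i\bar z_i^T]$, $\bar C=(\bar C_1,\ldots,\bar C_n)$, and $u^\tau(\Delta)=\underline\tau\,u(\underline\tau\Delta)$. For nonnegative nonzero symmetric $S=(S_1,\ldots,S_n)$ and $\Delta\in\mathcal D_n^+$, $\Lambda^S(\Delta)\in\mathcal D_n^+$ is the unique solution of $\Lambda^S(\Delta)_i=\frac1n\operatorname{tr}\Big(S_i\big(\frac1n\sum_j\frac{\Delta_jS_j}{1+\Delta_j\Lambda^S(\Delta)_j}+\gamma I_p\big)^{-1}\Big)$.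 *)

theory Defs
  imports "HOL-Probability.Probability"
begin

text \<open>Diagonal matrices in D_n^+ are represented by the vector of their diagonal
entries (type real^'n, all entries positive); operations on them are entrywise.
Matrices are p x p real matrices real^'p^'p.\<close>

definition posdiag :: "real^'n \<Rightarrow> bool" where
  "posdiag d \<longleftrightarrow> (\<forall>i. d $ i > 0)"

definition outer :: "real^'p \<Rightarrow> real^'p^'p" where
  "outer v = (\<chi> a b. v $ a * v $ b)"

definition Lambda :: "real \<Rightarrow> ('n::finite \<Rightarrow> real^'p^'p) \<Rightarrow> real^'n \<Rightarrow> real^'n" where
  "Lambda \<gamma> S \<Delta> = (THE l. posdiag l \<and>
     (\<forall>i. l $ i = (1 / real CARD('n)) * trace (S i **
        matrix_inv ((1 / real CARD('n)) *\<^sub>R (\<Sum>j\<in>UNIV. (\<Delta> $ j / (1 + \<Delta> $ j * l $ j)) *\<^sub>R S j)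
                    + \<gamma> *\<^sub>R mat 1))))"

definition utau :: "(real \<Rightarrow> real) \<Rightarrow> ('n::finite \<Rightarrow> real) \<Rightarrow> real^'n \<Rightarrow> real^'n" where
  "utau u \<tau> \<Delta> = (\<chi> i. max (\<tau> i) 1 * u (max (\<tau> i) 1 * \<Delta> $ i))"

end

theory Submission
  imports Defs
begin

text \<open>Write \<open>h(c)\<^sub>i = tr(S\<^sub>i (\<Sum>\<^sub>j c\<^sub>j S\<^sub>j / n + \<gamma> I)\<^sup>-\<^sup>1) / n\<close> and
  \<open>w(D,l)\<^sub>j = D\<^sub>j / (1 + D\<^sub>j l\<^sub>j)\<close>, so that \<open>\<Lambda>(D)\<close> is the positive fixed point of
  \<open>l \<mapsto> h(w(D,l))\<close> and the theorem asks for a unique positive fixed point of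
  \<open>D \<mapsto> w(\<Lambda>(u\<^sup>\<tau>(D)), u\<^sup>\<tau>(D))\<close>.
  By the variational formula \<open>x\<^sup>T A\<^sup>-\<^sup>1 x = max\<^sub>y (2 x\<^sup>T y - y\<^sup>T A y)\<close>, \<open>c' \<le> \<beta> c\<close> with \<open>\<beta> \<ge> 1\<close>
  implies \<open>h(c) \<le> \<beta> h(c')\<close>, strictly if \<open>\<beta> > 1\<close> because of the term \<open>\<gamma> I\<close>. Consequently both
  maps do not increase Thompson's part metric on the positive orthant, and strictly decrease it
  (for \<open>u\<^sup>\<tau>\<close> this is where the monotonicity of \<open>t u(t)\<close> and \<open>u(t)/t\<close> enters).
  Nonexpansiveness gives continuity, so Brouwer's theorem on an invariant box yields a fixed
  point; strict contraction makes it unique.\<close>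

section \<open>Quadratic forms of inverse matrices\<close>

lemma linear_transpose: "linear (transpose :: real^'n^'m \<Rightarrow> real^'m^'n)"
  by (rule linearI) (simp_all add: transpose_def vec_eq_iff)

lemma inner_matrix_vector_symmetric:
  fixes A :: "real^'n^'n"
  assumes "transpose A = A"
  shows "y \<bullet> (A *v z) = z \<bullet> (A *v y)"
proof -
  have "y \<bullet> (A *v z) = (y v* A) \<bullet> z"
    by (simp add: dot_lmul_matrix)
  also have "y v* A = A *v y"
    using transpose_matrix_vector[of A y] assms by simp
  finally show ?thesis
    by (simp add: inner_commute)
qed

lemma matrix_inv_unique:
  fixes A B :: "real^'n^'n"
  assumes "A ** B = mat 1"
  shows "matrix_inv A = B"
proof -
  have "\<exists>A'. A ** A' = mat 1 \<and> A' ** A = mat 1"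
    using assms invertible_def invertible_right_inverse by blast
  then have "matrix_inv A ** A = mat 1"
    unfolding matrix_inv_def by (rule someI_ex[THEN conjunct2])
  have "matrix_inv A = matrix_inv A ** (A ** B)"
    by (simp add: assms)
  also have "\<dots> = (matrix_inv A ** A) ** B"
    by (rule matrix_mul_assoc)
  finally show ?thesis
    by (simp add: \<open>matrix_inv A ** A = mat 1\<close>)
qed

lemma matrix_inv_scaleR_mat_1:
  assumes "k \<noteq> 0"
  shows "matrix_inv (k *\<^sub>R mat 1 :: real^'n^'n) = (1 / k) *\<^sub>R mat 1"
  by (rule matrix_inv_unique) (simp add: assms matrix_scalar_ac)

lemma quadratic_form_scaleR_mat_1: "y \<bullet> ((k *\<^sub>R mat 1) *v y) = k * (y \<bullet> (y :: real^'n))"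
  by (simp add: scaleR_matrix_vector_assoc[symmetric])

lemma matrix_mul_matrix_inv_if_coercive:
  fixes A :: "real^'n^'n"
  assumes "c > 0" and coercive: "\<And>y. c * (y \<bullet> y) \<le> y \<bullet> (A *v y)"
  shows "A ** matrix_inv A = mat 1"
proof -
  have "inj ((*v) A)"
  proof (rule injI)
    fix a b :: "real^'n"
    assume "A *v a = A *v b"
    then have "c * ((a - b) \<bullet> (a - b)) \<le> 0"
      using coercive[of "a - b"] by (simp add: matrix_vector_mult_diff_distrib)
    then have "\<not> 0 < (a - b) \<bullet> (a - b)"
      using \<open>c > 0\<close> by (simp only: not_less) (simp add: mult_le_0_iff)
    then show "a = b"
      by simp
  qed
  then have "invertible A"
    by (simp add: invertible_left_inverse matrix_left_invertible_injective)
  then obtain B where "A ** B = mat 1"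
    using invertible_right_inverse by blast
  then show ?thesis
    by (simp add: matrix_inv_unique)
qed

lemma quadratic_form_matrix_inv_ge:
  fixes B :: "real^'n^'n"
  assumes "transpose B = B" and inv: "B ** matrix_inv B = mat 1"
    and psd: "\<And>y. 0 \<le> y \<bullet> (B *v y)"
  shows "2 * (x \<bullet> y) - y \<bullet> (B *v y) \<le> x \<bullet> (matrix_inv B *v x)"
proof -
  define v where "v = matrix_inv B *v x"
  have Bv: "B *v v = x"
    by (simp add: v_def matrix_vector_mul_assoc inv)
  have "0 \<le> (y - v) \<bullet> (B *v (y - v))"
    by (rule psd)
  also have "\<dots> = y \<bullet> (B *v y) - 2 * (x \<bullet> y) + x \<bullet> v"
    using inner_matrix_vector_symmetric[OF assms(1), of v y] Bv
    by (simp add: matrix_vector_mult_diff_distrib inner_diff_left inner_diff_right inner_commute)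
  finally show ?thesis
    by (simp add: v_def)
qed

text \<open>A Loewner-order comparison: \<open>B \<le> \<beta> A - d I\<close> gives
  \<open>A\<^sup>-\<^sup>1 + (d/\<beta>) A\<^sup>-\<^sup>2 \<le> \<beta> B\<^sup>-\<^sup>1\<close>, by testing the variational formula for \<open>B\<^sup>-\<^sup>1\<close>
  at \<open>A\<^sup>-\<^sup>1 x / \<beta>\<close>.\<close>
lemma quadratic_form_matrix_inv_antimono:
  fixes A B :: "real^'n^'n"
  assumes invA: "A ** matrix_inv A = mat 1"
    and B: "transpose B = B" "B ** matrix_inv B = mat 1" "\<And>y. 0 \<le> y \<bullet> (B *v y)"
    and "\<beta> > 0" and le: "\<And>y. y \<bullet> (B *v y) \<le> \<beta> * (y \<bullet> (A *v y)) - d * (y \<bullet> y)"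
  shows "x \<bullet> (matrix_inv A *v x) + d / \<beta> * ((matrix_inv A *v x) \<bullet> (matrix_inv A *v x))
           \<le> \<beta> * (x \<bullet> (matrix_inv B *v x))"
proof -
  define v where "v = matrix_inv A *v x"
  have xv: "x \<bullet> v = v \<bullet> (A *v v)"
    by (simp add: v_def matrix_vector_mul_assoc invA inner_commute)
  have "2 * (x \<bullet> ((1 / \<beta>) *\<^sub>R v)) - ((1 / \<beta>) *\<^sub>R v) \<bullet> (B *v ((1 / \<beta>) *\<^sub>R v))
          \<le> x \<bullet> (matrix_inv B *v x)"
    by (rule quadratic_form_matrix_inv_ge[OF B])
  moreover have "((1 / \<beta>) *\<^sub>R v) \<bullet> (B *v ((1 / \<beta>) *\<^sub>R v)) = (v \<bullet> (B *v v)) / \<beta>\<^sup>2"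
    by (simp add: matrix_vector_mult_scaleR power2_eq_square)
  moreover have "(v \<bullet> (B *v v)) / \<beta>\<^sup>2 \<le> (\<beta> * (v \<bullet> (A *v v)) - d * (v \<bullet> v)) / \<beta>\<^sup>2"
    using le[of v] by (simp add: divide_right_mono)
  ultimately have le_inv: "2 * (v \<bullet> (A *v v)) / \<beta> - (\<beta> * (v \<bullet> (A *v v)) - d * (v \<bullet> v)) / \<beta>\<^sup>2
                     \<le> x \<bullet> (matrix_inv B *v x)"
    by (simp add: xv)
  have "q + d / \<beta> * s = \<beta> * (2 * q / \<beta> - (\<beta> * q - d * s) / \<beta>\<^sup>2)" for q s :: real
    using \<open>\<beta> > 0\<close> by (simp add: field_simps power2_eq_square)
  then have "x \<bullet> v + d / \<beta> * (v \<bullet> v)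
          = \<beta> * (2 * (v \<bullet> (A *v v)) / \<beta> - (\<beta> * (v \<bullet> (A *v v)) - d * (v \<bullet> v)) / \<beta>\<^sup>2)"
    unfolding xv .
  also have "\<dots> \<le> \<beta> * (x \<bullet> (matrix_inv B *v x))"
    using le_inv \<open>\<beta> > 0\<close> by (simp add: mult_left_mono)
  finally show ?thesis
    by (simp add: v_def)
qed

lemma quadratic_form_matrix_inv_le_if_coercive:
  fixes A :: "real^'n^'n"
  assumes inv: "A ** matrix_inv A = mat 1" and "c > 0"
    and coercive: "\<And>y. c * (y \<bullet> y) \<le> y \<bullet> (A *v y)"
  shows "x \<bullet> (matrix_inv A *v x) \<le> (x \<bullet> x) / c"
proof -
  have "x \<bullet> (matrix_inv A *v x) + 0 / 1 * ((matrix_inv A *v x) \<bullet> (matrix_inv A *v x))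
          \<le> 1 * (x \<bullet> (matrix_inv (c *\<^sub>R mat 1) *v x))"
    using \<open>c > 0\<close> coercive
    by (intro quadratic_form_matrix_inv_antimono[OF inv])
      (simp_all add: transpose_scalar matrix_inv_scaleR_mat_1 matrix_scalar_ac quadratic_form_scaleR_mat_1)
  then show ?thesis
    using \<open>c > 0\<close>
    by (simp add: matrix_inv_scaleR_mat_1 scaleR_matrix_vector_assoc[symmetric] divide_inverse mult.commute)
qed

lemma quadratic_form_matrix_inv_ge_if_bounded:
  fixes A :: "real^'n^'n"
  assumes "transpose A = A" "A ** matrix_inv A = mat 1" "\<And>y. 0 \<le> y \<bullet> (A *v y)"
    and "K > 0" and bounded: "\<And>y. y \<bullet> (A *v y) \<le> K * (y \<bullet> y)"
  shows "(x \<bullet> x) / K \<le> x \<bullet> (matrix_inv A *v x)"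
proof -
  have "2 * (x \<bullet> ((1 / K) *\<^sub>R x)) - K * (((1 / K) *\<^sub>R x) \<bullet> ((1 / K) *\<^sub>R x))
          \<le> x \<bullet> (matrix_inv A *v x)"
    using quadratic_form_matrix_inv_ge[OF assms(1-3), of x "(1 / K) *\<^sub>R x"]
      bounded[of "(1 / K) *\<^sub>R x"] by linarith
  moreover have "2 * (x \<bullet> ((1 / K) *\<^sub>R x)) - K * (((1 / K) *\<^sub>R x) \<bullet> ((1 / K) *\<^sub>R x)) = (x \<bullet> x) / K"
    using \<open>K > 0\<close> by (simp add: power2_eq_square field_simps)
  ultimately show ?thesis
    by simp
qed

section \<open>Second-moment matrices\<close>

lemma inner_outer_mult: "y \<bullet> (outer v *v z) = (v \<bullet> y) * (v \<bullet> z)"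
  unfolding outer_def inner_vec_def matrix_vector_mult_def
  by (simp add: sum_distrib_left sum_distrib_right mult_ac) (subst sum.swap, simp add: mult_ac)

lemma trace_outer_mult: "trace (outer v ** N) = v \<bullet> (N *v v)"
  unfolding outer_def trace_def inner_vec_def matrix_vector_mult_def matrix_matrix_mult_def
  by (simp add: sum_distrib_left mult_ac) (subst sum.swap, simp add: mult_ac)

lemma transpose_outer: "transpose (outer v) = outer v"
  by (simp add: outer_def transpose_def mult.commute)

lemma linear_trace_mult: "linear (\<lambda>A :: real^'n^'n. trace (A ** N))"
  by (rule linearI)
    (simp_all add: trace_def matrix_matrix_mult_def sum.distrib sum_distrib_left algebra_simps)

lemma linear_inner_matrix_vector: "linear (\<lambda>A :: real^'m^'n. y \<bullet> (A *v z))"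
  by (rule linearI)
    (simp_all add: matrix_vector_mult_add_rdistrib inner_add_right scaleR_matrix_vector_assoc[symmetric])

context
  fixes M :: "'w measure" and f :: "'w \<Rightarrow> real^'n"
  assumes integrable_outer: "integrable M (\<lambda>x. outer (f x))"
begin

lemma integrable_quadratic_form: "integrable M (\<lambda>x. f x \<bullet> (N *v f x))"
  using integrable_bounded_linear[OF linear_trace_mult[THEN linear_conv_bounded_linear[THEN iffD1]]
      integrable_outer]
  by (simp add: trace_outer_mult)

lemma trace_integral_outer_mult:
  "trace ((\<integral>x. outer (f x) \<partial>M) ** N) = (\<integral>x. f x \<bullet> (N *v f x) \<partial>M)"
  using integral_bounded_linear[OF linear_trace_mult[THEN linear_conv_bounded_linear[THEN iffD1]]
      integrable_outer]
  by (simp add: trace_outer_mult)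

lemma trace_integral_outer: "trace (\<integral>x. outer (f x) \<partial>M) = (\<integral>x. f x \<bullet> f x \<partial>M)"
  using trace_integral_outer_mult[of "mat 1"] by simp

lemma integrable_inner_mult: "integrable M (\<lambda>x. (f x \<bullet> y) * (f x \<bullet> z))"
  using integrable_bounded_linear[OF linear_inner_matrix_vector[THEN linear_conv_bounded_linear[THEN iffD1]]
      integrable_outer]
  by (simp add: inner_outer_mult)

lemma inner_integral_outer:
  "y \<bullet> ((\<integral>x. outer (f x) \<partial>M) *v z) = (\<integral>x. (f x \<bullet> y) * (f x \<bullet> z) \<partial>M)"
  using integral_bounded_linear[OF linear_inner_matrix_vector[THEN linear_conv_bounded_linear[THEN iffD1]]
      integrable_outer]
  by (simp add: inner_outer_mult)

lemma transpose_integral_outer: "transpose (\<integral>x. outer (f x) \<partial>M) = (\<integral>x. outer (f x) \<partial>M)"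
  using integral_bounded_linear[OF linear_transpose[THEN linear_conv_bounded_linear[THEN iffD1]]
      integrable_outer]
  by (simp add: transpose_outer)

end

section \<open>Thompson's part metric on the positive orthant\<close>

lemma posdiag_imp_nonneg: "posdiag x \<Longrightarrow> 0 \<le> x"
  by (simp add: posdiag_def less_eq_vec_def less_imp_le)

lemma scaleR_le_scaleR_vec: "0 \<le> y \<Longrightarrow> \<beta> \<le> \<alpha> \<Longrightarrow> \<beta> *\<^sub>R y \<le> \<alpha> *\<^sub>R (y :: real^'n)"
  by (simp add: less_eq_vec_def mult_right_mono)

lemma posdiag_ge_const:
  assumes "posdiag x"
  obtains a where "a > 0" "\<And>i. a \<le> x $ i"
proof
  show "Min (range (($) x)) > 0"
    using assms by (simp add: posdiag_def)
  show "Min (range (($) x)) \<le> x $ i" for i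
    by simp
qed

lemma posdiag_if_mem_cbox: "posdiag lo \<Longrightarrow> x \<in> cbox lo hi \<Longrightarrow> posdiag x"
  unfolding posdiag_def mem_box_cart by (meson less_le_trans)

text \<open>\<open>ratio_within \<alpha> x y\<close> with \<open>\<alpha> \<ge> 1\<close> says that the Thompson part metric
  \<open>max\<^sub>i \<bar>ln x\<^sub>i - ln y\<^sub>i\<bar>\<close> of positive vectors is at most \<open>ln \<alpha>\<close>.\<close>
definition ratio_within :: "real \<Rightarrow> real^'n \<Rightarrow> real^'n \<Rightarrow> bool" where
  "ratio_within \<alpha> x y \<longleftrightarrow> x \<le> \<alpha> *\<^sub>R y \<and> y \<le> \<alpha> *\<^sub>R x"

lemma ratio_within_commute: "ratio_within \<alpha> x y \<longleftrightarrow> ratio_within \<alpha> y x"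
  by (auto simp: ratio_within_def)

lemma max_ratio_attained:
  fixes x y :: "real^'n::finite"
  assumes "posdiag x" "posdiag y"
  obtains \<beta> i where "\<beta> > 0" "x \<le> \<beta> *\<^sub>R y" "x $ i = \<beta> * y $ i"
proof -
  define f where "f i = x $ i / y $ i" for i
  have "Max (range f) \<in> range f"
    by (rule Max_in) auto
  then obtain i where i: "Max (range f) = f i"
    by blast
  have "x $ j \<le> f i * y $ j" for j
  proof -
    have "f j \<le> f i"
      using Max_ge[of "range f" "f j"] i by simp
    then show ?thesis
      using assms(2) pos_divide_le_eq[of "y $ j" "x $ j" "f i"]
      unfolding posdiag_def f_def[of j] by simp
  qed
  moreover have "x $ i > 0" "y $ i > 0"
    using assms by (simp_all add: posdiag_def)
  then have "x $ i = f i * y $ i" "f i > 0"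
    by (simp_all add: f_def)
  ultimately show ?thesis
    by (intro that[of "f i" i]) (auto simp: less_eq_vec_def)
qed

lemma ratio_within_attained:
  fixes x y :: "real^'n::finite"
  assumes "posdiag x" "posdiag y"
  obtains r i where "r > 0" "ratio_within r x y" "x $ i = r * y $ i \<or> y $ i = r * x $ i"
proof -
  obtain \<beta>1 i1 where 1: "\<beta>1 > 0" "x \<le> \<beta>1 *\<^sub>R y" "x $ i1 = \<beta>1 * y $ i1"
    using max_ratio_attained[OF assms] .
  obtain \<beta>2 i2 where 2: "\<beta>2 > 0" "y \<le> \<beta>2 *\<^sub>R x" "y $ i2 = \<beta>2 * x $ i2"
    using max_ratio_attained[OF assms(2,1)] .
  have "x \<le> max \<beta>1 \<beta>2 *\<^sub>R y"
    using 1(2) scaleR_le_scaleR_vec[OF posdiag_imp_nonneg[OF assms(2)]] by (meson max.cobounded1 order_trans)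
  moreover have "y \<le> max \<beta>1 \<beta>2 *\<^sub>R x"
    using 2(2) scaleR_le_scaleR_vec[OF posdiag_imp_nonneg[OF assms(1)]] by (meson max.cobounded2 order_trans)
  ultimately show ?thesis
    using 1(1,3) 2(1,3) by (intro that[of "max \<beta>1 \<beta>2" "if \<beta>2 \<le> \<beta>1 then i1 else i2"])
      (auto simp: ratio_within_def max_def \<open>\<beta>1 > 0\<close>)
qed

text \<open>The least \<open>\<beta>\<close> with \<open>x \<le> \<beta> y\<close> is attained in some coordinate, so it cannot
  exceed \<open>\<alpha>\<close> if every such \<open>\<beta> > \<alpha>\<close> is strict in all coordinates.\<close>
lemma le_scaleR_if_strict_above:
  fixes x y :: "real^'n::finite"
  assumes "posdiag x" "posdiag y"
    and strict: "\<And>\<beta> i. \<beta> > \<alpha> \<Longrightarrow> x \<le> \<beta> *\<^sub>R y \<Longrightarrow> x $ i < \<beta> * y $ i"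
  shows "x \<le> \<alpha> *\<^sub>R y"
proof -
  obtain \<beta> i where \<beta>: "\<beta> > 0" "x \<le> \<beta> *\<^sub>R y" "x $ i = \<beta> * y $ i"
    using max_ratio_attained[OF assms(1,2)] .
  have "\<beta> \<le> \<alpha>"
  proof (rule ccontr)
    assume "\<not> \<beta> \<le> \<alpha>"
    then have "x $ i < \<beta> * y $ i"
      using strict[OF _ \<beta>(2)] by simp
    with \<beta>(3) show False
      by simp
  qed
  then have "\<beta> *\<^sub>R y \<le> \<alpha> *\<^sub>R y"
    by (rule scaleR_le_scaleR_vec[OF posdiag_imp_nonneg[OF assms(2)]])
  with \<beta>(2) show ?thesis
    by (rule order_trans)
qed

lemma fixed_point_unique_if_ratio_contracting:
  fixes F :: "real^'n::finite \<Rightarrow> real^'n"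
  assumes strict: "\<And>x y \<alpha> i. posdiag x \<Longrightarrow> posdiag y \<Longrightarrow> \<alpha> > 1 \<Longrightarrow> ratio_within \<alpha> x y
      \<Longrightarrow> F x $ i < \<alpha> * F y $ i"
    and x: "posdiag x" "F x = x" and y: "posdiag y" "F y = y"
  shows "x = y"
proof -
  obtain r i where r: "r > 0" "ratio_within r x y" "x $ i = r * y $ i \<or> y $ i = r * x $ i"
    using ratio_within_attained[OF x(1) y(1)] .
  have "r \<le> 1"
  proof (rule ccontr)
    assume "\<not> r \<le> 1"
    then have "r > 1"
      by simp
    moreover have "ratio_within r y x"
      using r(2) ratio_within_commute by blast
    ultimately have "F x $ i < r * F y $ i" "F y $ i < r * F x $ i"
      using strict[OF x(1) y(1) _ r(2)] strict[OF y(1) x(1)] by simp_all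
    then show False
      using r(3) unfolding x(2) y(2) by linarith
  qed
  have x_le: "x \<le> r *\<^sub>R y" and y_le: "y \<le> r *\<^sub>R x"
    using r(2) by (simp_all add: ratio_within_def)
  have "x \<le> 1 *\<^sub>R y"
    using order_trans[OF x_le scaleR_le_scaleR_vec[OF posdiag_imp_nonneg[OF y(1)] \<open>r \<le> 1\<close>]] .
  moreover have "y \<le> 1 *\<^sub>R x"
    using order_trans[OF y_le scaleR_le_scaleR_vec[OF posdiag_imp_nonneg[OF x(1)] \<open>r \<le> 1\<close>]] .
  ultimately have "x \<le> y" "y \<le> x"
    by simp_all
  then show ?thesis
    by (rule order.antisym)
qed

lemma lipschitz_on_if_ratio_nonexpansive:
  fixes F :: "real^'n::finite \<Rightarrow> real^'n" and B :: real
  assumes "a > 0" and lower: "\<And>x i. x \<in> P \<Longrightarrow> a \<le> x $ i"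
    and upper: "\<And>x i. x \<in> P \<Longrightarrow> F x $ i \<le> B" and "0 \<le> B"
    and nonexp: "\<And>x y \<alpha>. x \<in> P \<Longrightarrow> y \<in> P \<Longrightarrow> \<alpha> \<ge> 1 \<Longrightarrow> ratio_within \<alpha> x y
      \<Longrightarrow> F x \<le> \<alpha> *\<^sub>R F y"
  shows "lipschitz_on (CARD('n) * B / a) P F"
proof (rule lipschitz_onI)
  fix x y assume x: "x \<in> P" and y: "y \<in> P"
  define \<alpha> where "\<alpha> = 1 + dist x y / a"
  have "\<alpha> \<ge> 1"
    using \<open>a > 0\<close> by (simp add: \<alpha>_def)
  have "x $ i \<le> \<alpha> * y $ i \<and> y $ i \<le> \<alpha> * x $ i" for i
  proof -
    have "\<bar>x $ i - y $ i\<bar> \<le> dist x y"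
      using component_le_norm_cart[of "x - y" i] by (simp add: dist_norm)
    moreover have "dist x y \<le> dist x y / a * z" if "a \<le> z" for z
    proof -
      have "dist x y = dist x y / a * a"
        using \<open>a > 0\<close> by simp
      also have "\<dots> \<le> dist x y / a * z"
        using that \<open>a > 0\<close> by (intro mult_left_mono) auto
      finally show ?thesis .
    qed
    note this[OF lower[OF x, of i]] this[OF lower[OF y, of i]]
    moreover have "\<alpha> * y $ i = y $ i + dist x y / a * y $ i" "\<alpha> * x $ i = x $ i + dist x y / a * x $ i"
      by (simp_all add: \<alpha>_def distrib_right)
    ultimately show ?thesis
      unfolding abs_le_iff by linarith
  qed
  then have "ratio_within \<alpha> x y" "ratio_within \<alpha> y x"
    by (simp_all add: ratio_within_def less_eq_vec_def)
  then have Fxy: "F x \<le> \<alpha> *\<^sub>R F y" and Fyx: "F y \<le> \<alpha> *\<^sub>R F x"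
    using nonexp x y \<open>\<alpha> \<ge> 1\<close> by simp_all
  have comp: "\<bar>(F x - F y) $ i\<bar> \<le> (\<alpha> - 1) * B" for i
  proof -
    have "(\<alpha> - 1) * F x $ i \<le> (\<alpha> - 1) * B" "(\<alpha> - 1) * F y $ i \<le> (\<alpha> - 1) * B"
      using upper[OF x, of i] upper[OF y, of i] \<open>\<alpha> \<ge> 1\<close> by (simp_all add: mult_left_mono)
    moreover have "F x $ i \<le> \<alpha> * F y $ i" "F y $ i \<le> \<alpha> * F x $ i"
      using Fxy Fyx by (simp_all add: less_eq_vec_def)
    moreover have "\<alpha> * F y $ i = F y $ i + (\<alpha> - 1) * F y $ i" "\<alpha> * F x $ i = F x $ i + (\<alpha> - 1) * F x $ i"
      by (simp_all add: algebra_simps)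
    ultimately show ?thesis
      unfolding abs_le_iff vector_minus_component by linarith
  qed
  have "(\<Sum>i\<in>UNIV. \<bar>(F x - F y) $ i\<bar>) \<le> (\<Sum>i\<in>(UNIV :: 'n set). (\<alpha> - 1) * B)"
    by (rule sum_mono) (rule comp)
  then have "dist (F x) (F y) \<le> (\<Sum>i\<in>(UNIV :: 'n set). (\<alpha> - 1) * B)"
    unfolding dist_norm using norm_le_l1_cart[of "F x - F y"] by linarith
  also have "\<dots> = CARD('n) * B / a * dist x y"
    by (simp add: \<alpha>_def)
  finally show "dist (F x) (F y) \<le> CARD('n) * B / a * dist x y" .
qed (use \<open>a > 0\<close> \<open>0 \<le> B\<close> in simp)

lemma fixed_point_if_ratio_nonexpansive:
  fixes F :: "real^'n::finite \<Rightarrow> real^'n"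
  assumes "posdiag lo" "lo \<le> hi" and into: "\<And>x. x \<in> cbox lo hi \<Longrightarrow> F x \<in> cbox lo hi"
    and nonexp: "\<And>x y \<alpha>. x \<in> cbox lo hi \<Longrightarrow> y \<in> cbox lo hi \<Longrightarrow> \<alpha> \<ge> 1
      \<Longrightarrow> ratio_within \<alpha> x y \<Longrightarrow> F x \<le> \<alpha> *\<^sub>R F y"
  obtains x where "x \<in> cbox lo hi" "F x = x"
proof -
  obtain a where a: "a > 0" "\<And>i. a \<le> lo $ i"
    using posdiag_ge_const[OF assms(1)] by blast
  have upper: "F x $ i \<le> norm hi" if "x \<in> cbox lo hi" for x i
  proof -
    have "F x $ i \<le> hi $ i"
      using into[OF that] by (simp add: mem_box_cart)
    also have "\<dots> \<le> norm hi"
      by (rule order_trans[OF abs_ge_self component_le_norm_cart])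
    finally show ?thesis .
  qed
  have lower: "a \<le> x $ i" if "x \<in> cbox lo hi" for x i
  proof -
    have "lo $ i \<le> x $ i"
      using that by (simp add: mem_box_cart)
    then show ?thesis
      by (rule order_trans[OF a(2)])
  qed
  have "lipschitz_on (CARD('n) * norm hi / a) (cbox lo hi) F"
    by (rule lipschitz_on_if_ratio_nonexpansive[OF a(1) lower upper norm_ge_zero nonexp])
  then have cont: "continuous_on (cbox lo hi) F"
    by (rule lipschitz_on_continuous_on)
  have "lo \<in> cbox lo hi"
    using \<open>lo \<le> hi\<close> by (simp add: mem_box_cart less_eq_vec_def)
  then have nonempty: "cbox lo hi \<noteq> {}"
    by blast
  have "F \<in> cbox lo hi \<rightarrow> cbox lo hi"
    using into by blast
  then obtain x where "x \<in> cbox lo hi" "F x = x"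
    by (rule brouwer[OF compact_cbox convex_box(1) nonempty cont])
  then show ?thesis
    by (rule that)
qed

definition weights :: "real^'n \<Rightarrow> real^'n \<Rightarrow> real^'n" where
  "weights D l = (\<chi> j. D $ j / (1 + D $ j * l $ j))"

lemma weights_denominator_pos:
  fixes D l :: "real^'n"
  assumes "0 \<le> D" "0 \<le> l"
  shows "0 < 1 + D $ j * l $ j"
proof -
  have "0 \<le> D $ j" "0 \<le> l $ j"
    using assms by (simp_all add: less_eq_vec_def)
  then have "0 \<le> D $ j * l $ j"
    by (rule mult_nonneg_nonneg)
  then show ?thesis
    by simp
qed

lemma weights_nonneg: "0 \<le> D \<Longrightarrow> 0 \<le> l \<Longrightarrow> 0 \<le> weights D l"
  by (simp add: weights_def less_eq_vec_def)

lemma weights_le: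
  assumes "0 \<le> D" "0 \<le> l"
  shows "weights D l \<le> D"
  unfolding less_eq_vec_def
proof
  fix j
  have "1 \<le> 1 + D $ j * l $ j" "0 \<le> D $ j"
    using assms by (simp_all add: less_eq_vec_def)
  then show "weights D l $ j \<le> D $ j"
    using divide_left_mono[of 1 "1 + D $ j * l $ j" "D $ j"] by (simp add: weights_def)
qed

lemma weights_le_scaleR:
  fixes D D' l l' :: "real^'n"
  assumes "0 \<le> D" "0 \<le> D'" "0 \<le> l" "0 \<le> l'" and D'_le: "D' \<le> \<beta> *\<^sub>R D" and l_le: "l \<le> \<beta> *\<^sub>R l'"
  shows "weights D' l' \<le> \<beta> *\<^sub>R weights D l"
    and "D' $ j < \<beta> * D $ j \<Longrightarrow> weights D' l' $ j < \<beta> * weights D l $ j"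
proof -
  have key: "D' $ j * (1 + D $ j * l $ j) - \<beta> * D $ j * (1 + D' $ j * l' $ j)
      \<le> D' $ j - \<beta> * D $ j" for j
  proof -
    have "D' $ j * D $ j * l $ j \<le> D' $ j * D $ j * (\<beta> * l' $ j)"
      using assms(1,2) l_le by (intro mult_left_mono) (simp_all add: less_eq_vec_def)
    then show ?thesis
      by (simp add: algebra_simps)
  qed
  have frac: "a / p \<le> \<beta> * (b / q) \<longleftrightarrow> a * q \<le> \<beta> * b * p"
    "a / p < \<beta> * (b / q) \<longleftrightarrow> a * q < \<beta> * b * p" if "p > 0" "q > 0" for a b p q :: real
    using that by (simp_all add: field_simps)
  have iff: "weights D' l' $ j \<le> \<beta> * weights D l $ j \<longleftrightarrow>
      D' $ j * (1 + D $ j * l $ j) \<le> \<beta> * D $ j * (1 + D' $ j * l' $ j)"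
    "weights D' l' $ j < \<beta> * weights D l $ j \<longleftrightarrow>
      D' $ j * (1 + D $ j * l $ j) < \<beta> * D $ j * (1 + D' $ j * l' $ j)" for j
    unfolding weights_def vec_lambda_beta
    by (rule frac[OF weights_denominator_pos[OF assms(2,4)] weights_denominator_pos[OF assms(1,3)]])+
  show "weights D' l' \<le> \<beta> *\<^sub>R weights D l"
    unfolding less_eq_vec_def
  proof
    fix j
    have "D' $ j \<le> \<beta> * D $ j"
      using D'_le by (simp add: less_eq_vec_def)
    then show "weights D' l' $ j \<le> (\<beta> *\<^sub>R weights D l) $ j"
      unfolding vector_scaleR_component real_scaleR_def iff(1) using key[of j] by linarith
  qed
  show "weights D' l' $ j < \<beta> * weights D l $ j" if "D' $ j < \<beta> * D $ j"
    unfolding iff(2) using that key[of j] by linarith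
qed

lemma weights_posdiag:
  fixes D l :: "real^'n"
  assumes "posdiag D" "0 \<le> l"
  shows "posdiag (weights D l)"
  using assms weights_denominator_pos[OF posdiag_imp_nonneg[OF assms(1)] assms(2)]
  by (simp add: posdiag_def weights_def)

section \<open>The fixed-point equation of \<open>\<Lambda>\<close>\<close>

text \<open>The vectors \<open>w i\<close> stand for the normalised data \<open>x\<^sub>i / sqrt (max \<tau>\<^sub>i 1)\<close>, so that \<open>S\<close>
  is \<open>Cbar\<close> of the theorem; \<open>interf c\<close> is the right-hand side of the equation defining \<open>\<Lambda>\<^sup>S\<close>, evaluated at
  the weights \<open>c\<^sub>j = \<Delta>\<^sub>j / (1 + \<Delta>\<^sub>j \<Lambda>\<^sub>j)\<close>.\<close>
locale regularized_moments =
  fixes M :: "'w measure" and w :: "'n::finite \<Rightarrow> 'w \<Rightarrow> real^'p::finite" and \<gamma> :: real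
  assumes gamma_pos: "\<gamma> > 0"
    and integrable_outer: "\<And>i. integrable M (\<lambda>x. outer (w i x))"
    and second_moment_pos: "\<And>i. (\<integral>x. w i x \<bullet> w i x \<partial>M) > 0"
begin

definition S :: "'n \<Rightarrow> real^'p^'p" where
  "S i = (\<integral>x. outer (w i x) \<partial>M)"

definition reg_cov :: "real^'n \<Rightarrow> real^'p^'p" where
  "reg_cov c = (1 / real CARD('n)) *\<^sub>R (\<Sum>j\<in>UNIV. c $ j *\<^sub>R S j) + \<gamma> *\<^sub>R mat 1"

definition interf :: "real^'n \<Rightarrow> real^'n" where
  "interf c = (\<chi> i. (1 / real CARD('n)) * trace (S i ** matrix_inv (reg_cov c)))"

lemma trace_S_pos: "trace (S i) > 0"
  using second_moment_pos by (simp add: S_def trace_integral_outer[OF integrable_outer])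

lemma S_nonneg: "0 \<le> y \<bullet> (S i *v y)"
  unfolding S_def inner_integral_outer[OF integrable_outer] by simp

lemma S_le_trace: "y \<bullet> (S i *v y) \<le> trace (S i) * (y \<bullet> y)"
proof -
  have "y \<bullet> (S i *v y) \<le> (\<integral>x. (w i x \<bullet> w i x) * (y \<bullet> y) \<partial>M)"
    unfolding S_def inner_integral_outer[OF integrable_outer]
    using integrable_inner_mult[OF integrable_outer, of i y y]
      integrable_quadratic_form[OF integrable_outer, of i "mat 1"] Cauchy_Schwarz_ineq
    by (intro integral_mono) (auto simp: power2_eq_square)
  then show ?thesis
    by (simp add: S_def trace_integral_outer[OF integrable_outer])
qed

lemma quadratic_form_reg_cov:
  "y \<bullet> (reg_cov c *v y) = (\<Sum>j\<in>UNIV. c $ j * (y \<bullet> (S j *v y))) / CARD('n) + \<gamma> * (y \<bullet> y)"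
proof -
  note lin = linear_inner_matrix_vector[of y y]
  have "y \<bullet> (reg_cov c *v y)
      = 1 / real CARD('n) * (\<Sum>j\<in>UNIV. c $ j * (y \<bullet> (S j *v y))) + \<gamma> * (y \<bullet> (mat 1 *v y))"
    by (simp only: reg_cov_def linear_add[OF lin] linear_scale[OF lin] linear_sum[OF lin] real_scaleR_def)
  then show ?thesis
    by simp
qed

lemma transpose_reg_cov: "transpose (reg_cov c) = reg_cov c"
  by (simp only: reg_cov_def linear_add[OF linear_transpose] linear_scale[OF linear_transpose]
      linear_sum[OF linear_transpose] S_def transpose_integral_outer[OF integrable_outer] transpose_mat)

lemma reg_cov_coercive: "0 \<le> c \<Longrightarrow> \<gamma> * (y \<bullet> y) \<le> y \<bullet> (reg_cov c *v y)"
  unfolding quadratic_form_reg_cov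
  by (simp add: less_eq_vec_def S_nonneg sum_nonneg)

lemma reg_cov_nonneg: "0 \<le> c \<Longrightarrow> 0 \<le> y \<bullet> (reg_cov c *v y)"
  by (rule order_trans[OF _ reg_cov_coercive]) (simp_all add: gamma_pos less_imp_le)

lemma reg_cov_mul_matrix_inv: "0 \<le> c \<Longrightarrow> reg_cov c ** matrix_inv (reg_cov c) = mat 1"
  by (rule matrix_mul_matrix_inv_if_coercive[OF gamma_pos reg_cov_coercive])

lemma reg_cov_le:
  assumes "0 \<le> c" "\<And>j. c $ j \<le> C"
  shows "y \<bullet> (reg_cov c *v y) \<le> (\<gamma> + C * (\<Sum>j\<in>UNIV. trace (S j)) / CARD('n)) * (y \<bullet> y)"
proof -
  have "(\<Sum>j\<in>UNIV. c $ j * (y \<bullet> (S j *v y))) \<le> (\<Sum>j\<in>UNIV. C * (trace (S j) * (y \<bullet> y)))"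
    using assms S_nonneg S_le_trace order_trans[OF _ assms(2)]
    by (intro sum_mono mult_mono) (auto simp: less_eq_vec_def)
  also have "\<dots> = C * (\<Sum>j\<in>UNIV. trace (S j)) * (y \<bullet> y)"
    by (simp add: sum_distrib_left sum_distrib_right mult_ac)
  finally have "(\<Sum>j\<in>UNIV. c $ j * (y \<bullet> (S j *v y))) / CARD('n)
      \<le> C * (\<Sum>j\<in>UNIV. trace (S j)) * (y \<bullet> y) / CARD('n)"
    by (rule divide_right_mono) simp
  then show ?thesis
    unfolding quadratic_form_reg_cov by (simp add: algebra_simps)
qed

lemma interf_eq_integral:
  "interf c $ i = (\<integral>x. w i x \<bullet> (matrix_inv (reg_cov c) *v w i x) \<partial>M) / CARD('n)"
  by (simp add: interf_def S_def trace_integral_outer_mult[OF integrable_outer])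

lemma integral_norm_matrix_inv_pos:
  assumes "0 \<le> c"
  defines "N \<equiv> matrix_inv (reg_cov c)"
  shows "integrable M (\<lambda>x. (N *v w i x) \<bullet> (N *v w i x))"
    and "(\<integral>x. (N *v w i x) \<bullet> (N *v w i x) \<partial>M) > 0"
proof -
  have eq: "(N *v v) \<bullet> (N *v v) = v \<bullet> ((transpose N ** N) *v v)" for v :: "real^'p"
  proof -
    have "(N *v v) \<bullet> (N *v v) = (v v* transpose N) \<bullet> (N *v v)"
      by (simp only: vector_transpose_matrix)
    also have "\<dots> = v \<bullet> (transpose N *v (N *v v))"
      by (rule dot_lmul_matrix)
    finally show ?thesis
      by (simp only: matrix_vector_mul_assoc)
  qed
  show int: "integrable M (\<lambda>x. (N *v w i x) \<bullet> (N *v w i x))"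
    unfolding eq by (rule integrable_quadratic_form[OF integrable_outer])
  have ne: "(\<integral>x. (N *v w i x) \<bullet> (N *v w i x) \<partial>M) \<noteq> 0"
  proof
    assume "(\<integral>x. (N *v w i x) \<bullet> (N *v w i x) \<partial>M) = 0"
    then have "AE x in M. N *v w i x = 0"
      using integral_nonneg_eq_0_iff_AE[OF int] by simp
    then have "AE x in M. w i x \<bullet> w i x = 0"
    proof (rule AE_mp, intro AE_I2 impI)
      fix x assume "N *v w i x = 0"
      moreover have "w i x = reg_cov c *v (N *v w i x)"
        by (simp add: N_def matrix_vector_mul_assoc reg_cov_mul_matrix_inv[OF assms(1)])
      ultimately show "w i x \<bullet> w i x = 0"
        by simp
    qed
    then have "(\<integral>x. w i x \<bullet> w i x \<partial>M) = 0"
      by (rule integral_eq_zero_AE)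
    with second_moment_pos[of i] show False
      by simp
  qed
  have ge: "(\<integral>x. (N *v w i x) \<bullet> (N *v w i x) \<partial>M) \<ge> 0"
    by simp
  show "(\<integral>x. (N *v w i x) \<bullet> (N *v w i x) \<partial>M) > 0"
    by (rule order_le_neq_trans[OF ge ne[symmetric]])
qed

lemma quadratic_form_reg_cov_le_scaleR:
  assumes "c' \<le> \<beta> *\<^sub>R c"
  shows "y \<bullet> (reg_cov c' *v y) \<le> \<beta> * (y \<bullet> (reg_cov c *v y)) - (\<beta> - 1) * \<gamma> * (y \<bullet> y)"
proof -
  have term_le: "c' $ j * (y \<bullet> (S j *v y)) \<le> \<beta> * (c $ j * (y \<bullet> (S j *v y)))" for j
  proof -
    have "c' $ j \<le> \<beta> * c $ j"
      using assms by (simp add: less_eq_vec_def)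
    from mult_right_mono[OF this S_nonneg] show ?thesis
      by (simp add: mult.assoc)
  qed
  have "(\<Sum>j\<in>UNIV. c' $ j * (y \<bullet> (S j *v y))) \<le> (\<Sum>j\<in>UNIV. \<beta> * (c $ j * (y \<bullet> (S j *v y))))"
    by (rule sum_mono) (rule term_le)
  then have "(\<Sum>j\<in>UNIV. c' $ j * (y \<bullet> (S j *v y))) / CARD('n)
      \<le> \<beta> * ((\<Sum>j\<in>UNIV. c $ j * (y \<bullet> (S j *v y))) / CARD('n))"
    by (simp add: sum_distrib_left[symmetric] divide_right_mono)
  then show ?thesis
    unfolding quadratic_form_reg_cov by (simp add: algebra_simps)
qed

text \<open>The regularisation \<open>\<gamma> I\<close> is what makes the comparison strict for \<open>\<beta> > 1\<close>.\<close>
lemma interf_le_scaleR: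
  assumes c: "0 \<le> c" and c': "0 \<le> c'" and "1 \<le> \<beta>" and le: "c' \<le> \<beta> *\<^sub>R c"
  shows "interf c \<le> \<beta> *\<^sub>R interf c'"
    and "1 < \<beta> \<Longrightarrow> interf c $ i < \<beta> * interf c' $ i"
proof -
  define N where "N = matrix_inv (reg_cov c)"
  define N' where "N' = matrix_inv (reg_cov c')"
  define k where "k = (\<beta> - 1) * \<gamma> / \<beta>"
  have pointwise: "x \<bullet> (N *v x) + k * ((N *v x) \<bullet> (N *v x)) \<le> \<beta> * (x \<bullet> (N' *v x))" for x
    unfolding N_def N'_def k_def
    using \<open>1 \<le> \<beta>\<close> quadratic_form_reg_cov_le_scaleR[OF le]
    by (intro quadratic_form_matrix_inv_antimono[OF reg_cov_mul_matrix_inv[OF c]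
        transpose_reg_cov reg_cov_mul_matrix_inv[OF c'] reg_cov_nonneg[OF c']]) simp_all
  have integrals: "(\<integral>x. w i x \<bullet> (N *v w i x) \<partial>M) + k * (\<integral>x. (N *v w i x) \<bullet> (N *v w i x) \<partial>M)
      \<le> \<beta> * (\<integral>x. w i x \<bullet> (N' *v w i x) \<partial>M)" for i
  proof -
    have "(\<integral>x. w i x \<bullet> (N *v w i x) + k * ((N *v w i x) \<bullet> (N *v w i x)) \<partial>M)
        \<le> (\<integral>x. \<beta> * (w i x \<bullet> (N' *v w i x)) \<partial>M)"
      using pointwise integrable_quadratic_form[OF integrable_outer]
        integral_norm_matrix_inv_pos(1)[OF c] unfolding N_def N'_def
      by (intro integral_mono) auto
    then show ?thesis
      using integrable_quadratic_form[OF integrable_outer] integral_norm_matrix_inv_pos(1)[OF c]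
      unfolding N_def by simp
  qed
  have "(\<integral>x. w i x \<bullet> (N *v w i x) \<partial>M) \<le> \<beta> * (\<integral>x. w i x \<bullet> (N' *v w i x) \<partial>M)" for i
  proof -
    have "0 \<le> k * (\<integral>x. (N *v w i x) \<bullet> (N *v w i x) \<partial>M)"
      using \<open>1 \<le> \<beta>\<close> gamma_pos by (simp add: k_def)
    then show ?thesis
      using integrals[of i] by linarith
  qed
  then show "interf c \<le> \<beta> *\<^sub>R interf c'"
    by (simp add: less_eq_vec_def interf_eq_integral N_def N'_def divide_right_mono)
  assume "1 < \<beta>"
  then have "0 < k * (\<integral>x. (N *v w i x) \<bullet> (N *v w i x) \<partial>M)"
    using gamma_pos integral_norm_matrix_inv_pos(2)[OF c] unfolding N_def k_def by simp
  then have "(\<integral>x. w i x \<bullet> (N *v w i x) \<partial>M) < \<beta> * (\<integral>x. w i x \<bullet> (N' *v w i x) \<partial>M)"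
    using integrals[of i] by linarith
  then show "interf c $ i < \<beta> * interf c' $ i"
    by (simp add: interf_eq_integral N_def N'_def divide_strict_right_mono)
qed

definition interf_upper :: "real^'n" where
  "interf_upper = (\<chi> i. trace (S i) / (CARD('n) * \<gamma>))"

definition interf_lower :: "real \<Rightarrow> real^'n" where
  "interf_lower C = (\<chi> i. trace (S i) / (CARD('n) * (\<gamma> + C * (\<Sum>j\<in>UNIV. trace (S j)) / CARD('n))))"

lemma interf_le_upper:
  assumes "0 \<le> c"
  shows "interf c \<le> interf_upper"
  unfolding less_eq_vec_def
proof
  fix i
  have "(\<integral>x. w i x \<bullet> (matrix_inv (reg_cov c) *v w i x) \<partial>M) \<le> (\<integral>x. (w i x \<bullet> w i x) / \<gamma> \<partial>M)"
    using quadratic_form_matrix_inv_le_if_coercive[OF reg_cov_mul_matrix_inv[OF assms] gamma_pos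
        reg_cov_coercive[OF assms]]
      integrable_quadratic_form[OF integrable_outer] integrable_quadratic_form[OF integrable_outer, of _ "mat 1"]
    by (intro integral_mono) auto
  also have "\<dots> = trace (S i) / \<gamma>"
    by (simp add: S_def trace_integral_outer[OF integrable_outer])
  finally have "interf c $ i \<le> trace (S i) / \<gamma> / CARD('n)"
    unfolding interf_eq_integral by (rule divide_right_mono) simp
  then show "interf c $ i \<le> interf_upper $ i"
    by (simp add: interf_upper_def mult.commute)
qed

lemma interf_ge_lower:
  assumes "0 \<le> c" "\<And>j. c $ j \<le> C"
  shows "interf_lower C \<le> interf c"
  unfolding less_eq_vec_def
proof
  fix i
  define K where "K = \<gamma> + C * (\<Sum>j\<in>UNIV. trace (S j)) / CARD('n)"
  have "0 \<le> C"
    using assms(1) order_trans[OF _ assms(2)] by (simp add: less_eq_vec_def)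
  then have "K > 0"
    unfolding K_def using gamma_pos trace_S_pos by (simp add: sum_nonneg less_imp_le add_pos_nonneg)
  have "trace (S i) / K = (\<integral>x. (w i x \<bullet> w i x) / K \<partial>M)"
    by (simp add: S_def trace_integral_outer[OF integrable_outer])
  also have "\<dots> \<le> (\<integral>x. w i x \<bullet> (matrix_inv (reg_cov c) *v w i x) \<partial>M)"
    using quadratic_form_matrix_inv_ge_if_bounded[OF transpose_reg_cov reg_cov_mul_matrix_inv[OF assms(1)]
        reg_cov_nonneg[OF assms(1)] \<open>K > 0\<close>] reg_cov_le[OF assms]
      integrable_quadratic_form[OF integrable_outer] integrable_quadratic_form[OF integrable_outer, of _ "mat 1"]
    unfolding K_def by (intro integral_mono) auto
  finally have "trace (S i) / K / CARD('n) \<le> interf c $ i"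
    unfolding interf_eq_integral by (rule divide_right_mono) simp
  then show "interf_lower C $ i \<le> interf c $ i"
    by (simp add: interf_lower_def K_def mult.commute)
qed

lemma posdiag_interf_lower:
  assumes "0 \<le> C"
  shows "posdiag (interf_lower C)"
proof -
  have "0 \<le> C * (\<Sum>j\<in>UNIV. trace (S j)) / CARD('n)"
    using assms trace_S_pos by (simp add: sum_nonneg less_imp_le)
  then show ?thesis
    using gamma_pos trace_S_pos by (simp add: posdiag_def interf_lower_def)
qed

lemma interf_lower_le_upper:
  assumes "0 \<le> C"
  shows "interf_lower C \<le> interf_upper"
proof -
  have "interf_lower C \<le> interf 0"
    by (rule interf_ge_lower) (simp_all add: assms)
  also have "\<dots> \<le> interf_upper"
    by (rule interf_le_upper) simp
  finally show ?thesis .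
qed

definition is_Lambda :: "real^'n \<Rightarrow> real^'n \<Rightarrow> bool" where
  "is_Lambda D l \<longleftrightarrow> posdiag l \<and> l = interf (weights D l)"

lemma Lambda_eq_The: "Lambda \<gamma> S D = (THE l. is_Lambda D l)"
  unfolding Lambda_def is_Lambda_def interf_def reg_cov_def weights_def
  by (simp add: vec_eq_iff)

lemma is_Lambda_le_scaleR:
  assumes D: "posdiag D" "posdiag D'" and l: "is_Lambda D l" "is_Lambda D' l'"
    and "1 \<le> \<alpha>" and D'_le: "D' \<le> \<alpha> *\<^sub>R D"
  shows "l \<le> \<alpha> *\<^sub>R l'" and "1 < \<alpha> \<Longrightarrow> l $ i < \<alpha> * l' $ i"
proof -
  have pos: "posdiag l" "posdiag l'"
    using l by (simp_all add: is_Lambda_def)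
  note nonneg = posdiag_imp_nonneg[OF D(1)] posdiag_imp_nonneg[OF D(2)]
    posdiag_imp_nonneg[OF pos(1)] posdiag_imp_nonneg[OF pos(2)]
  have strict: "l $ i < \<beta> * l' $ i" if "1 < \<beta>" "D' \<le> \<beta> *\<^sub>R D" "l \<le> \<beta> *\<^sub>R l'" for \<beta> i
  proof -
    have "weights D' l' \<le> \<beta> *\<^sub>R weights D l"
      by (rule weights_le_scaleR(1)[OF nonneg that(2,3)])
    then have "interf (weights D l) $ i < \<beta> * interf (weights D' l') $ i"
      using that(1) by (intro interf_le_scaleR(2) weights_nonneg nonneg) simp_all
    then show ?thesis
      using l by (simp add: is_Lambda_def)
  qed
  show le: "l \<le> \<alpha> *\<^sub>R l'"
  proof (rule le_scaleR_if_strict_above[OF pos])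
    fix \<beta> i
    assume "\<alpha> < \<beta>" "l \<le> \<beta> *\<^sub>R l'"
    moreover have "\<alpha> *\<^sub>R D \<le> \<beta> *\<^sub>R D"
      using \<open>\<alpha> < \<beta>\<close> by (intro scaleR_le_scaleR_vec nonneg) simp
    ultimately show "l $ i < \<beta> * l' $ i"
      using \<open>1 \<le> \<alpha>\<close> order_trans[OF D'_le] by (intro strict) simp_all
  qed
  show "l $ i < \<alpha> * l' $ i" if "1 < \<alpha>"
    by (rule strict[OF that D'_le le])
qed

lemma is_Lambda_unique:
  assumes "posdiag D" "is_Lambda D l" "is_Lambda D l'"
  shows "l = l'"
proof -
  have "l \<le> 1 *\<^sub>R l'"
    by (rule is_Lambda_le_scaleR(1)[OF assms(1,1,2,3)]) simp_all
  moreover have "l' \<le> 1 *\<^sub>R l"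
    by (rule is_Lambda_le_scaleR(1)[OF assms(1,1,3,2)]) simp_all
  ultimately have "l \<le> l'" "l' \<le> l"
    by simp_all
  then show ?thesis
    by (rule order.antisym)
qed

lemma interf_weights_mem_cbox:
  assumes "0 \<le> D" "0 \<le> l"
  shows "interf (weights D l) \<in> cbox (interf_lower (norm D)) interf_upper"
proof -
  have c: "0 \<le> weights D l"
    by (rule weights_nonneg[OF assms])
  have "weights D l $ j \<le> norm D" for j
  proof -
    have "weights D l $ j \<le> D $ j"
      using weights_le[OF assms] by (simp add: less_eq_vec_def)
    also have "\<dots> \<le> norm D"
      by (rule order_trans[OF abs_ge_self component_le_norm_cart])
    finally show ?thesis .
  qed
  then show ?thesis
    unfolding mem_box_cart using interf_ge_lower[OF c] interf_le_upper[OF c]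
    by (simp add: less_eq_vec_def)
qed

lemma interf_weights_le_scaleR:
  assumes "0 \<le> D" "0 \<le> l" "0 \<le> l'" "1 \<le> \<alpha>" "ratio_within \<alpha> l l'"
  shows "interf (weights D l) \<le> \<alpha> *\<^sub>R interf (weights D l')"
proof -
  have "D \<le> \<alpha> *\<^sub>R D"
    using scaleR_le_scaleR_vec[OF \<open>0 \<le> D\<close> \<open>1 \<le> \<alpha>\<close>] by simp
  then have "weights D l' \<le> \<alpha> *\<^sub>R weights D l"
    using assms by (intro weights_le_scaleR(1)) (simp_all add: ratio_within_def)
  then show ?thesis
    using assms by (intro interf_le_scaleR(1) weights_nonneg)
qed

lemma is_Lambda_exists:
  assumes "posdiag D"
  obtains l where "is_Lambda D l"
proof -
  have "0 \<le> D" "0 \<le> norm D"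
    using assms by (simp_all add: posdiag_imp_nonneg)
  note lower = posdiag_interf_lower[OF \<open>0 \<le> norm D\<close>]
  have nonneg: "0 \<le> l" if "l \<in> cbox (interf_lower (norm D)) interf_upper" for l
    by (rule posdiag_imp_nonneg[OF posdiag_if_mem_cbox[OF lower that]])
  obtain l where l: "l \<in> cbox (interf_lower (norm D)) interf_upper" "interf (weights D l) = l"
  proof (rule fixed_point_if_ratio_nonexpansive[OF lower interf_lower_le_upper[OF \<open>0 \<le> norm D\<close>]])
    show "interf (weights D l) \<in> cbox (interf_lower (norm D)) interf_upper"
      if "l \<in> cbox (interf_lower (norm D)) interf_upper" for l
      by (rule interf_weights_mem_cbox[OF \<open>0 \<le> D\<close> nonneg[OF that]])
    show "interf (weights D l) \<le> \<alpha> *\<^sub>R interf (weights D l')"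
      if "l \<in> cbox (interf_lower (norm D)) interf_upper" "l' \<in> cbox (interf_lower (norm D)) interf_upper"
        "1 \<le> \<alpha>" "ratio_within \<alpha> l l'" for l l' \<alpha>
      by (rule interf_weights_le_scaleR[OF \<open>0 \<le> D\<close> nonneg[OF that(1)] nonneg[OF that(2)] that(3,4)])
  qed
  then have "is_Lambda D l"
    unfolding is_Lambda_def using posdiag_if_mem_cbox[OF lower l(1)] by simp
  then show ?thesis
    by (rule that)
qed

lemma is_Lambda_Lambda:
  assumes "posdiag D"
  shows "is_Lambda D (Lambda \<gamma> S D)"
proof -
  have "\<exists>!l. is_Lambda D l"
    using is_Lambda_exists[OF assms] is_Lambda_unique[OF assms] by metis
  then show ?thesis
    unfolding Lambda_eq_The by (rule theI')
qed

end

section \<open>The outer fixed-point equation\<close>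

locale reweighted_moments = regularized_moments M w \<gamma>
  for M :: "'w measure" and w :: "'n::finite \<Rightarrow> 'w \<Rightarrow> real^'p::finite" and \<gamma> :: real +
  fixes ut :: "real^'n \<Rightarrow> real^'n" and U :: real
  assumes ut_posdiag: "\<And>D. posdiag D \<Longrightarrow> posdiag (ut D)"
    and ut_le: "\<And>D i. posdiag D \<Longrightarrow> ut D $ i \<le> U"
    and ut_le_scaleR: "\<And>D D' \<alpha>. posdiag D \<Longrightarrow> posdiag D' \<Longrightarrow> ratio_within \<alpha> D D'
      \<Longrightarrow> ut D \<le> \<alpha> *\<^sub>R ut D'"
begin

text \<open>\<open>phi D $ i = \<Lambda>\<^sub>i / (1 + ut D $ i * \<Lambda>\<^sub>i)\<close> with \<open>\<Lambda> = Lambda \<gamma> S (ut D)\<close>; the theorem is the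
  statement that \<open>phi\<close> has a unique positive fixed point when \<open>ut = utau u \<tau>\<close>.\<close>
definition phi :: "real^'n \<Rightarrow> real^'n" where
  "phi D = weights (Lambda \<gamma> S (ut D)) (ut D)"

lemma phi_le_scaleR:
  assumes D: "posdiag D" "posdiag D'" and "1 \<le> \<alpha>" and ratio: "ratio_within \<alpha> D D'"
  shows "phi D \<le> \<alpha> *\<^sub>R phi D'" and "1 < \<alpha> \<Longrightarrow> phi D $ i < \<alpha> * phi D' $ i"
proof -
  have u: "posdiag (ut D)" "posdiag (ut D')"
    using ut_posdiag D by simp_all
  have u_le: "ut D' \<le> \<alpha> *\<^sub>R ut D"
    using ut_le_scaleR[OF D(2,1)] ratio ratio_within_commute by blast
  have L: "is_Lambda (ut D) (Lambda \<gamma> S (ut D))" "is_Lambda (ut D') (Lambda \<gamma> S (ut D'))"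
    using is_Lambda_Lambda u by simp_all
  note nonneg = posdiag_imp_nonneg[OF u(1)] posdiag_imp_nonneg[OF u(2)]
    L[unfolded is_Lambda_def, THEN conjunct1, THEN posdiag_imp_nonneg]
  have "Lambda \<gamma> S (ut D) \<le> \<alpha> *\<^sub>R Lambda \<gamma> S (ut D')"
    by (rule is_Lambda_le_scaleR(1)[OF u L \<open>1 \<le> \<alpha>\<close> u_le])
  then show "phi D \<le> \<alpha> *\<^sub>R phi D'"
    unfolding phi_def using nonneg u_le by (intro weights_le_scaleR(1))
  assume "1 < \<alpha>"
  have "Lambda \<gamma> S (ut D) $ i < \<alpha> * Lambda \<gamma> S (ut D') $ i"
    by (rule is_Lambda_le_scaleR(2)[OF u L \<open>1 \<le> \<alpha>\<close> u_le \<open>1 < \<alpha>\<close>])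
  then show "phi D $ i < \<alpha> * phi D' $ i"
    unfolding phi_def
    using nonneg u_le is_Lambda_le_scaleR(1)[OF u L \<open>1 \<le> \<alpha>\<close> u_le]
    by (intro weights_le_scaleR(2))
qed

lemma U_nonneg: "0 \<le> U"
proof -
  fix i :: 'n
  have one: "posdiag (\<chi> i::'n. 1)"
    by (simp add: posdiag_def)
  then have "0 < ut (\<chi> i. 1) $ i"
    using ut_posdiag[OF one] by (simp add: posdiag_def)
  also have "\<dots> \<le> U"
    by (rule ut_le[OF one])
  finally show ?thesis
    by simp
qed

definition phi_lower :: "real^'n" where
  "phi_lower = weights (interf_lower U) (\<chi> i. U)"

lemma
  shows posdiag_phi_lower: "posdiag phi_lower"
    and phi_lower_le_upper: "phi_lower \<le> interf_upper"
proof -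
  have a: "posdiag (interf_lower U)" "interf_lower U \<le> interf_upper"
    using posdiag_interf_lower interf_lower_le_upper U_nonneg by simp_all
  have U: "0 \<le> (\<chi> i::'n. U)"
    using U_nonneg by (simp add: less_eq_vec_def)
  show "posdiag phi_lower"
    unfolding phi_lower_def by (rule weights_posdiag[OF a(1) U])
  show "phi_lower \<le> interf_upper"
    unfolding phi_lower_def by (rule order_trans[OF weights_le[OF posdiag_imp_nonneg[OF a(1)] U] a(2)])
qed

lemma phi_mem_cbox:
  assumes "posdiag D"
  shows "phi D \<in> cbox phi_lower interf_upper"
proof -
  have u: "posdiag (ut D)" and u_le_U: "ut D \<le> 1 *\<^sub>R (\<chi> i. U)"
    using ut_posdiag ut_le assms by (simp_all add: less_eq_vec_def)
  define L where "L = Lambda \<gamma> S (ut D)"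
  have L: "posdiag L" "L = interf (weights (ut D) L)"
    using is_Lambda_Lambda[OF u] by (simp_all add: is_Lambda_def L_def)
  note nonneg = posdiag_imp_nonneg[OF u] posdiag_imp_nonneg[OF L(1)]
  have c: "0 \<le> weights (ut D) L"
    by (rule weights_nonneg[OF nonneg])
  have "weights (ut D) L $ j \<le> U" for j
    using order_trans[OF weights_le[OF nonneg] u_le_U] by (simp add: less_eq_vec_def)
  then have "interf_lower U \<le> 1 *\<^sub>R L" "L \<le> interf_upper"
    using interf_ge_lower[OF c] interf_le_upper[OF c] L(2)[symmetric] by simp_all
  then have "phi_lower \<le> phi D"
    unfolding phi_lower_def phi_def L_def[symmetric]
    using nonneg posdiag_imp_nonneg[OF posdiag_interf_lower[OF U_nonneg]] u_le_U
    by (subst scaleR_one[symmetric], intro weights_le_scaleR(1)) (simp_all add: less_eq_vec_def U_nonneg)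
  moreover have "phi D \<le> interf_upper"
    unfolding phi_def L_def[symmetric]
    using order_trans[OF weights_le[OF nonneg(2,1)] \<open>L \<le> interf_upper\<close>] .
  ultimately show ?thesis
    by (simp add: mem_box_cart less_eq_vec_def)
qed

lemma phi_fixed_point_exists:
  obtains D where "posdiag D" "phi D = D"
proof -
  note pos = posdiag_if_mem_cbox[OF posdiag_phi_lower]
  obtain D where D: "D \<in> cbox phi_lower interf_upper" "phi D = D"
  proof (rule fixed_point_if_ratio_nonexpansive[OF posdiag_phi_lower phi_lower_le_upper])
    show "phi D \<in> cbox phi_lower interf_upper" if "D \<in> cbox phi_lower interf_upper" for D
      by (rule phi_mem_cbox[OF pos[OF that]])
    show "phi D \<le> \<alpha> *\<^sub>R phi D'"
      if "D \<in> cbox phi_lower interf_upper" "D' \<in> cbox phi_lower interf_upper" "1 \<le> \<alpha>"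
        "ratio_within \<alpha> D D'" for D D' \<alpha>
      by (rule phi_le_scaleR(1)[OF pos[OF that(1)] pos[OF that(2)] that(3,4)])
  qed
  then show ?thesis
    using posdiag_if_mem_cbox[OF posdiag_phi_lower D(1)] that by simp
qed

lemma phi_fixed_point_unique:
  assumes "posdiag D" "phi D = D" "posdiag D'" "phi D' = D'"
  shows "D = D'"
proof (rule fixed_point_unique_if_ratio_contracting[where F = phi])
  fix x y :: "real^'n" and \<alpha> :: real and i
  assume "posdiag x" "posdiag y" "1 < \<alpha>" "ratio_within \<alpha> x y"
  then show "phi x $ i < \<alpha> * phi y $ i"
    using phi_le_scaleR(2)[of x y \<alpha>] by simp
qed (simp_all add: assms)

lemma ex1_phi_fixed_point: "\<exists>!D. posdiag D \<and> D = phi D"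
proof -
  obtain D where "posdiag D" "phi D = D"
    by (rule phi_fixed_point_exists)
  then show ?thesis
    using phi_fixed_point_unique by auto
qed

end

section \<open>The weight function \<open>u\<^sup>\<tau>\<close> and the normalised data\<close>

lemma le_scaled_if_mono_antimono:
  fixes u :: "real \<Rightarrow> real"
  assumes u_pos: "\<forall>t>0. u t > 0"
    and mono: "mono_on {0<..} (\<lambda>t. t * u t)" and antimono: "antimono_on {0<..} (\<lambda>t. u t / t)"
    and "s > 0" "t > 0" "s \<le> \<alpha> * t" "t \<le> \<alpha> * s"
  shows "u s \<le> \<alpha> * u t"
proof (cases "s \<le> t")
  case True
  have "s * u s \<le> t * u t"
    using mono_onD[OF mono _ _ True] \<open>s > 0\<close> \<open>t > 0\<close> by simp
  then have "u s \<le> t / s * u t"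
    using \<open>s > 0\<close> by (simp add: field_simps)
  also have "\<dots> \<le> \<alpha> * u t"
    using \<open>s > 0\<close> \<open>t \<le> \<alpha> * s\<close> u_pos \<open>t > 0\<close>
    by (intro mult_right_mono) (simp_all add: divide_le_eq mult.commute less_imp_le)
  finally show ?thesis .
next
  case False
  have "u s / s \<le> u t / t"
    using monotone_onD[OF antimono, of t s] \<open>s > 0\<close> \<open>t > 0\<close> False by simp
  then have "u s \<le> s / t * u t"
    using \<open>s > 0\<close> \<open>t > 0\<close> by (simp add: field_simps)
  also have "\<dots> \<le> \<alpha> * u t"
    using \<open>t > 0\<close> \<open>s \<le> \<alpha> * t\<close> u_pos
    by (intro mult_right_mono) (simp_all add: divide_le_eq less_imp_le)
  finally show ?thesis .
qed

lemma posdiag_utau: "\<forall>t>0. u t > 0 \<Longrightarrow> posdiag D \<Longrightarrow> posdiag (utau u \<tau> D)"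
  by (simp add: posdiag_def utau_def)

lemma utau_le:
  assumes "\<forall>t>0. u t > 0" "\<forall>t>0. u t \<le> u_inf" "posdiag D"
  shows "utau u \<tau> D $ i \<le> (\<Sum>j\<in>UNIV. max (\<tau> j) 1) * u_inf"
proof -
  have "0 < max (\<tau> i) 1 * D $ i"
    using assms(3) by (simp add: posdiag_def)
  then show ?thesis
    unfolding utau_def vec_lambda_beta using assms(1,2)
    by (intro mult_mono member_le_sum) (simp_all add: sum_nonneg less_imp_le)
qed

lemma utau_le_scaleR:
  assumes u_pos: "\<forall>t>0. u t > 0"
    and mono: "mono_on {0<..} (\<lambda>t. t * u t)" and antimono: "antimono_on {0<..} (\<lambda>t. u t / t)"
    and D: "posdiag D" "posdiag D'" and ratio: "ratio_within \<alpha> D D'"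
  shows "utau u \<tau> D \<le> \<alpha> *\<^sub>R utau u \<tau> D'"
  unfolding less_eq_vec_def
proof
  fix i
  define t where "t = max (\<tau> i) 1"
  have "t \<ge> 1"
    by (simp add: t_def)
  have "D $ i \<le> \<alpha> * D' $ i" "D' $ i \<le> \<alpha> * D $ i"
    using ratio by (simp_all add: ratio_within_def less_eq_vec_def)
  then have "t * D $ i \<le> \<alpha> * (t * D' $ i)" "t * D' $ i \<le> \<alpha> * (t * D $ i)"
    using \<open>t \<ge> 1\<close> mult_left_mono[of _ _ t] by (simp_all add: mult.left_commute)
  then have "u (t * D $ i) \<le> \<alpha> * u (t * D' $ i)"
    using D \<open>t \<ge> 1\<close> by (intro le_scaled_if_mono_antimono[OF u_pos mono antimono])
      (simp_all add: posdiag_def)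
  then have "t * u (t * D $ i) \<le> t * (\<alpha> * u (t * D' $ i))"
    using \<open>t \<ge> 1\<close> by (intro mult_left_mono) simp_all
  then show "utau u \<tau> D $ i \<le> (\<alpha> *\<^sub>R utau u \<tau> D') $ i"
    by (simp add: utau_def t_def[symmetric] mult.left_commute)
qed

definition outer_cross :: "real^'p \<Rightarrow> real^'p \<Rightarrow> real^'p^'p" where
  "outer_cross m v = (\<chi> a b. v $ a * m $ b + m $ a * v $ b)"

lemma outer_affine:
  "outer (k *\<^sub>R (s *\<^sub>R v + m)) = (k * k * s * s) *\<^sub>R outer v + (k * k * s) *\<^sub>R outer_cross m v
     + (k * k) *\<^sub>R outer m"
  by (simp add: outer_def outer_cross_def vec_eq_iff algebra_simps)

lemma integrable_outer_affine:
  assumes "finite_measure M" "integrable M f" "integrable M (\<lambda>x. outer (f x))"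
  shows "integrable M (\<lambda>x. outer (k *\<^sub>R (s *\<^sub>R f x + m)))"
proof -
  interpret finite_measure M
    by fact
  have "bounded_linear (outer_cross m)"
    by (rule linear_conv_bounded_linear[THEN iffD1], rule linearI)
      (simp_all add: outer_cross_def vec_eq_iff algebra_simps)
  then have "integrable M (\<lambda>x. outer_cross m (f x))"
    using assms(2) by (rule integrable_bounded_linear)
  then show ?thesis
    unfolding outer_affine using assms(3) by simp
qed

lemma integral_inner_affine:
  assumes "prob_space M" "integrable M f" "integral\<^sup>L M f = 0" "integrable M (\<lambda>x. f x \<bullet> f x)"
  shows "(\<integral>x. (k *\<^sub>R (s *\<^sub>R f x + m)) \<bullet> (k *\<^sub>R (s *\<^sub>R f x + m)) \<partial>M)
      = (k * k * s * s) * (\<integral>x. f x \<bullet> f x \<partial>M) + (k * k) * (m \<bullet> m)"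
proof -
  interpret prob_space M
    by fact
  have "(k *\<^sub>R (s *\<^sub>R v + m)) \<bullet> (k *\<^sub>R (s *\<^sub>R v + m))
      = (k * k * s * s) * (v \<bullet> v) + (2 * k * k * s) * (v \<bullet> m) + (k * k) * (m \<bullet> m)" for v
    by (simp add: inner_add_left inner_add_right inner_commute algebra_simps)
  moreover have "(\<integral>x. f x \<bullet> m \<partial>M) = 0"
    using assms(2,3) by simp
  ultimately show ?thesis
    using assms(2,4) by (simp add: prob_space)
qed

lemma regularized_moments_affine:
  fixes z :: "'n::finite \<Rightarrow> 'w \<Rightarrow> real^'p::finite"
  assumes "prob_space M" "\<gamma> > 0" and z_int: "\<And>i. integrable M (z i)"
    and z_centered: "\<And>i. integral\<^sup>L M (z i) = 0" and z_int2: "\<And>i. integrable M (\<lambda>x. outer (z i x))"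
    and z_pos: "\<And>i. (\<integral>x. z i x \<bullet> z i x \<partial>M) > 0" and "\<And>i. k i > 0" "\<And>i. s i > 0"
  shows "regularized_moments M (\<lambda>i x. k i *\<^sub>R (s i *\<^sub>R z i x + m)) \<gamma>"
proof
  fix i
  show "integrable M (\<lambda>x. outer (k i *\<^sub>R (s i *\<^sub>R z i x + m)))"
    using \<open>prob_space M\<close> z_int z_int2 by (intro integrable_outer_affine) (simp_all add: prob_space_def)
  have "(\<integral>x. (k i *\<^sub>R (s i *\<^sub>R z i x + m)) \<bullet> (k i *\<^sub>R (s i *\<^sub>R z i x + m)) \<partial>M)
      = (k i * k i * s i * s i) * (\<integral>x. z i x \<bullet> z i x \<partial>M) + (k i * k i) * (m \<bullet> m)"
    by (rule integral_inner_affine[OF \<open>prob_space M\<close> z_int z_centered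
          integrable_quadratic_form[OF z_int2, of _ "mat 1", simplified]])
  also have "\<dots> > 0"
    using assms(7,8) z_pos by (intro add_pos_nonneg mult_pos_pos) simp_all
  finally show "(\<integral>x. (k i *\<^sub>R (s i *\<^sub>R z i x + m)) \<bullet> (k i *\<^sub>R (s i *\<^sub>R z i x + m)) \<partial>M) > 0" .
qed (rule \<open>\<gamma> > 0\<close>)

lemma reweighted_moments_utau:
  assumes "regularized_moments M w \<gamma>" and u_pos: "\<forall>t>0. u t > 0" and u_inf: "\<forall>t>0. u t \<le> u_inf"
    and "mono_on {0<..} (\<lambda>t. t * u t)" "antimono_on {0<..} (\<lambda>t. u t / t)"
  shows "reweighted_moments M w \<gamma> (utau u \<tau>) ((\<Sum>j\<in>UNIV. max (\<tau> j) 1) * u_inf)"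
  unfolding reweighted_moments_def reweighted_moments_axioms_def
  using assms by (simp add: posdiag_utau utau_le utau_le_scaleR)

theorem proposition6:
  fixes M :: "'w measure"
    and z :: "'n::finite \<Rightarrow> 'w \<Rightarrow> real^'p::finite"
    and \<tau> :: "'n \<Rightarrow> real"
    and m :: "real^'p"
    and u :: "real \<Rightarrow> real"
    and \<gamma> :: real
  assumes "prob_space M"
    and gamma: "\<gamma> > 0"
    and u_pos: "\<forall>t>0. u t > 0"
    and u_bdd: "\<exists>u_inf. \<forall>t>0. u t \<le> u_inf"
    and u_mono: "mono_on {0<..} (\<lambda>t. t * u t)"
    and u_antimono: "antimono_on {0<..} (\<lambda>t. u t / t)"
    and indep: "prob_space.indep_vars M (\<lambda>_. borel) z UNIV"
    and z_int: "\<And>i. integrable M (z i)"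
    and z_centered: "\<And>i. integral\<^sup>L M (z i) = 0"
    and z_int2: "\<And>i. integrable M (\<lambda>w. outer (z i w))"
    and trC: "(INF i. trace (integral\<^sup>L M (\<lambda>w. outer (z i w))) / real CARD('n)) > 0"
    and tau_pos: "\<forall>i. \<tau> i > 0"
  shows "let Cbar = (\<lambda>i. integral\<^sup>L M (\<lambda>w. outer ((1 / sqrt (max (\<tau> i) 1)) *\<^sub>R
                          (sqrt (\<tau> i) *\<^sub>R z i w + m))))
         in \<exists>!D. posdiag D \<and>
              D = (\<chi> i. Lambda \<gamma> Cbar (utau u \<tau> D) $ i /
                        (1 + utau u \<tau> D $ i * Lambda \<gamma> Cbar (utau u \<tau> D) $ i))"
proof -
  define w where "w i x = (1 / sqrt (max (\<tau> i) 1)) *\<^sub>R (sqrt (\<tau> i) *\<^sub>R z i x + m)" for i x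
  have z_pos: "(\<integral>x. z i x \<bullet> z i x \<partial>M) > 0" for i
  proof -
    have "(INF i. trace (\<integral>x. outer (z i x) \<partial>M) / CARD('n)) \<le> trace (\<integral>x. outer (z i x) \<partial>M) / CARD('n)"
      by (rule cINF_lower) (simp_all add: bdd_below_finite)
    with trC have "0 < trace (\<integral>x. outer (z i x) \<partial>M) / CARD('n)"
      by linarith
    then show ?thesis
      by (simp add: trace_integral_outer[OF z_int2] zero_less_divide_iff)
  qed
  have "regularized_moments M w \<gamma>"
    unfolding w_def
    by (rule regularized_moments_affine[OF \<open>prob_space M\<close> gamma z_int z_centered z_int2 z_pos])
      (simp_all add: tau_pos)
  then interpret regularized_moments M w \<gamma> .
  obtain u_inf where u_inf: "\<forall>t>0. u t \<le> u_inf"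
    using u_bdd by blast
  interpret reweighted_moments M w \<gamma> "utau u \<tau>" "(\<Sum>j\<in>UNIV. max (\<tau> j) 1) * u_inf"
    by (rule reweighted_moments_utau[OF regularized_moments_axioms u_pos u_inf u_mono u_antimono])
  have "S = (\<lambda>i. \<integral>x. outer ((1 / sqrt (max (\<tau> i) 1)) *\<^sub>R (sqrt (\<tau> i) *\<^sub>R z i x + m)) \<partial>M)"
    by (rule ext) (simp add: S_def w_def)
  moreover have "phi D = (\<chi> i. Lambda \<gamma> S (utau u \<tau> D) $ i /
      (1 + utau u \<tau> D $ i * Lambda \<gamma> S (utau u \<tau> D) $ i))" for D
    by (simp add: phi_def weights_def mult.commute)
  ultimately show ?thesis
    using ex1_phi_fixed_point by (simp add: Let_def)
qed

end
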